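(* Let $A$ be an associative unital algebra over a commutative ring $k$ and $B$ a subalgebra with $L(A)\subseteq B\subseteq\mathrm{End}_k(A)$. Suppose $A^B$ is a domain and $A^B$ is large in $A$, and that either (1) $A$ is uniform as a left $A$-module (i.e. $\mathrm{udim}(A)=1$), or (2) $S=A^B\setminus\{0\}$ is left permutable in $A$ (for all $a\in A$ and $s\in S$ there exist $y\in S$ and $b\in A$ with $bs=ya$) and every $s\in S$ is a left non-zero divisor of $A$ (i.e. $sc=0$ with $c\in A$ implies $c=0$). Then $A$ is a critically compressible left $B$-module.
   Context: $L(A)=\{L_a:a\in A\}$, $L_a(x)=ax$; $A$ is a left $B$-module via $\varphi\cdot a=\varphi(a)$; its $B$-submodules are the $B$-stable left ideals. $A^B=\{a\in A: b\cdot a=(b\cdot1)a\ \forall b\in B\}$, which is isomorphic to $\mathrm{End}_B(A)$ via $f\mapsto(1)f$. $A^B$ is large in $A$ if $A^B\cap I\neq0$ for every nonzero $B$-submodule $I$ of $A$ (equivalently, $A$ is a retractable left $B$-module). A nonzero module is critically compressible if it embeds into each of its nonzero submodules and into none of its factor modules $M/N$ with $N\neq0$. *)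

theory Defs
  imports Main "HOL.Modules"
begin

text \<open>An associative unital algebra over a commutative ring: the ring structure comes
from the type class ring_1 on 'a, the k-module structure from scale.\<close>
definition algebra_over :: "('k::comm_ring_1 \<Rightarrow> 'a::ring_1 \<Rightarrow> 'a) \<Rightarrow> bool" where
  "algebra_over scale \<longleftrightarrow> module scale \<and>
     (\<forall>r x y. scale r (x * y) = scale r x * y \<and> scale r (x * y) = x * scale r y)"

definition End_k :: "('k::comm_ring_1 \<Rightarrow> 'a::ring_1 \<Rightarrow> 'a) \<Rightarrow> ('a \<Rightarrow> 'a) set" where
  "End_k scale = {f. module_hom scale scale f}"

definition subalgebra_End :: "('k::comm_ring_1 \<Rightarrow> 'a::ring_1 \<Rightarrow> 'a) \<Rightarrow> ('a \<Rightarrow> 'a) set \<Rightarrow> bool" where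
  "subalgebra_End scale B \<longleftrightarrow> B \<subseteq> End_k scale \<and> id \<in> B \<and> (\<lambda>x. 0) \<in> B \<and>
     (\<forall>f\<in>B. \<forall>g\<in>B. (\<lambda>x. f x + g x) \<in> B) \<and>
     (\<forall>f\<in>B. (\<lambda>x. - f x) \<in> B) \<and>
     (\<forall>f\<in>B. \<forall>g\<in>B. f \<circ> g \<in> B) \<and>
     (\<forall>r. \<forall>f\<in>B. (\<lambda>x. scale r (f x)) \<in> B)"

definition Lmult :: "('a::ring_1 \<Rightarrow> 'a) set" where
  "Lmult = {(\<lambda>x. a * x) | a. True}"

definition add_subgroup :: "'a::ring_1 set \<Rightarrow> bool" where
  "add_subgroup I \<longleftrightarrow> 0 \<in> I \<and> (\<forall>x\<in>I. \<forall>y\<in>I. x + y \<in> I) \<and> (\<forall>x\<in>I. - x \<in> I)"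

text \<open>B-submodules of A (A is a left B-module via phi . a = phi(a)).\<close>
definition B_submodule :: "('a::ring_1 \<Rightarrow> 'a) set \<Rightarrow> 'a set \<Rightarrow> bool" where
  "B_submodule B I \<longleftrightarrow> add_subgroup I \<and> (\<forall>\<phi>\<in>B. \<forall>x\<in>I. \<phi> x \<in> I)"

definition left_ideal :: "'a::ring_1 set \<Rightarrow> bool" where
  "left_ideal I \<longleftrightarrow> add_subgroup I \<and> (\<forall>a x. x \<in> I \<longrightarrow> a * x \<in> I)"

definition inv_B :: "('a::ring_1 \<Rightarrow> 'a) set \<Rightarrow> 'a set" where
  "inv_B B = {a. \<forall>b\<in>B. b a = b 1 * a}"

definition is_domain_sub :: "'a::ring_1 set \<Rightarrow> bool" where
  "is_domain_sub S \<longleftrightarrow> (1::'a) \<noteq> 0 \<and> (\<forall>x\<in>S. \<forall>y\<in>S. x * y = 0 \<longrightarrow> x = 0 \<or> y = 0)"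

definition large_in :: "('a::ring_1 \<Rightarrow> 'a) set \<Rightarrow> bool" where
  "large_in B \<longleftrightarrow> (\<forall>I. B_submodule B I \<and> I \<noteq> {0} \<longrightarrow> inv_B B \<inter> I \<noteq> {0})"

definition uniform_ring :: "'a::ring_1 itself \<Rightarrow> bool" where
  "uniform_ring _ \<longleftrightarrow> (UNIV::'a set) \<noteq> {0} \<and>
     (\<forall>I J::'a set. left_ideal I \<and> left_ideal J \<and> I \<noteq> {0} \<and> J \<noteq> {0} \<longrightarrow> I \<inter> J \<noteq> {0})"

definition left_permutable :: "'a::ring_1 set \<Rightarrow> bool" where
  "left_permutable S \<longleftrightarrow> (\<forall>a. \<forall>s\<in>S. \<exists>y\<in>S. \<exists>b. b * s = y * a)"

definition left_nonzero_divisor :: "'a::ring_1 \<Rightarrow> bool" where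
  "left_nonzero_divisor s \<longleftrightarrow> (\<forall>c. s * c = 0 \<longrightarrow> c = 0)"

definition B_hom :: "('a::ring_1 \<Rightarrow> 'a) set \<Rightarrow> ('a \<Rightarrow> 'a) \<Rightarrow> bool" where
  "B_hom B f \<longleftrightarrow> (\<forall>x y. f (x + y) = f x + f y) \<and> (\<forall>\<phi>\<in>B. \<forall>x. f (\<phi> x) = \<phi> (f x))"

definition embeds_into_sub :: "('a::ring_1 \<Rightarrow> 'a) set \<Rightarrow> 'a set \<Rightarrow> bool" where
  "embeds_into_sub B N \<longleftrightarrow> (\<exists>f. B_hom B f \<and> inj f \<and> range f \<subseteq> N)"

text \<open>A embeds into the factor module A/N.  A map A -> A/N is given by a choice of
representatives f, i.e. x maps to the coset f x + N; B-linearity and injectivity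
are then expressed modulo N.\<close>
definition embeds_into_quot :: "('a::ring_1 \<Rightarrow> 'a) set \<Rightarrow> 'a set \<Rightarrow> bool" where
  "embeds_into_quot B N \<longleftrightarrow> (\<exists>f.
     (\<forall>x y. f (x + y) - (f x + f y) \<in> N) \<and>
     (\<forall>\<phi>\<in>B. \<forall>x. f (\<phi> x) - \<phi> (f x) \<in> N) \<and>
     (\<forall>x. f x \<in> N \<longrightarrow> x = 0))"

definition critically_compressible :: "('a::ring_1 \<Rightarrow> 'a) set \<Rightarrow> bool" where
  "critically_compressible B \<longleftrightarrow> (UNIV::'a set) \<noteq> {0} \<and>
     (\<forall>N. B_submodule B N \<and> N \<noteq> {0} \<longrightarrow> embeds_into_sub B N) \<and>
     (\<forall>N. B_submodule B N \<and> N \<noteq> {0} \<longrightarrow> \<not> embeds_into_quot B N)"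

end

theory Submission
  imports Defs
begin

text \<open>
  Let B be a subalgebra of End_k(A) containing all left multiplications.
  Then every b in B commutes with right multiplication by an invariant a in A^B, and
  the B-submodules of A are left ideals.

  Embedding into submodules: a nonzero submodule N contains, by largeness, a nonzero
  invariant s.  Its left annihilator is a B-submodule meeting A^B trivially (A^B is a
  domain), so by largeness it is zero; hence right multiplication by s is an injective
  B-linear map A \<rightarrow> N.

  No embedding into factor modules: a B-linear embedding A \<rightarrow> A/N sends 1 to a
  representative u with Au \<inter> N = 0.  If A is uniform, Au and N are nonzero left ideals
  and must meet.  In the permutable case pick a nonzero invariant s in N and write
  b s = y u with y invariant and nonzero; then y u lies in N, forcing y = 0.
\<close>

lemma uniform_meets_cyclic:
  fixes u :: "'a::ring_1"
  assumes uniform: "uniform_ring TYPE('a)" and N: "left_ideal N" "N \<noteq> {0}"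
    and u: "u \<noteq> 0"
  obtains x where "x * u \<in> N" "x * u \<noteq> 0"
proof -
  define I where "I = {x * u | x. True}"
  have "left_ideal I"
    unfolding left_ideal_def add_subgroup_def I_def
    by (auto simp: mult.assoc[symmetric])
      (metis mult_zero_left, metis distrib_right, metis minus_mult_left)
  moreover have "u \<in> I" unfolding I_def by (metis (mono_tags) mult_1 mem_Collect_eq)
  ultimately have "I \<inter> N \<noteq> {0}"
    using uniform N u unfolding uniform_ring_def by blast
  moreover have "0 \<in> I" "0 \<in> N"
    using \<open>left_ideal I\<close> N(1) unfolding left_ideal_def add_subgroup_def by blast+
  ultimately obtain z where "z \<in> I" "z \<in> N" "z \<noteq> 0" by blast
  then show ?thesis using that unfolding I_def by blast
qed

locale operator_algebra =
  fixes scale :: "'k::comm_ring_1 \<Rightarrow> 'a::ring_1 \<Rightarrow> 'a"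
    and B :: "('a \<Rightarrow> 'a) set"
  assumes subalgebra: "subalgebra_End scale B"
    and left_mults: "Lmult \<subseteq> B"
begin

lemma B_zero: "b \<in> B \<Longrightarrow> b 0 = 0"
  using subalgebra module_hom.zero unfolding subalgebra_End_def End_k_def by blast

lemma left_mult_in_B: "(\<lambda>x. a * x) \<in> B"
  using left_mults unfolding Lmult_def by blast

lemma zero_in_inv_B: "0 \<in> inv_B B"
  unfolding inv_B_def using B_zero by simp

text \<open>Operators in B commute with right multiplication by invariant elements:
  apply the invariance of a to the operator b \<circ> L_x.\<close>
lemma B_commutes_right_mult:
  assumes b: "b \<in> B" and a: "a \<in> inv_B B"
  shows "b (x * a) = b x * a"
proof -
  have "b \<circ> (\<lambda>y. x * y) \<in> B"
    using subalgebra b left_mult_in_B unfolding subalgebra_End_def by blast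
  then have "(b \<circ> (\<lambda>y. x * y)) a = (b \<circ> (\<lambda>y. x * y)) 1 * a"
    using a unfolding inv_B_def by blast
  then show ?thesis by simp
qed

lemma B_submodule_left_ideal: "B_submodule B N \<Longrightarrow> left_ideal N"
  unfolding B_submodule_def left_ideal_def using left_mult_in_B by blast

lemma right_mult_B_hom: "s \<in> inv_B B \<Longrightarrow> B_hom B (\<lambda>x. x * s)"
  unfolding B_hom_def using B_commutes_right_mult by (simp add: distrib_right)

lemma annihilator_B_submodule:
  assumes "s \<in> inv_B B"
  shows "B_submodule B {x. x * s = 0}"
  unfolding B_submodule_def add_subgroup_def
  using B_commutes_right_mult[OF _ assms] B_zero by (auto simp: distrib_right)

lemma large_nonzero_invariant:
  assumes "large_in B" "B_submodule B N" "N \<noteq> {0}"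
  obtains s where "s \<in> inv_B B" "s \<in> N" "s \<noteq> 0"
proof -
  have "inv_B B \<inter> N \<noteq> {0}" using assms unfolding large_in_def by blast
  moreover have "0 \<in> N" using assms(2) unfolding B_submodule_def add_subgroup_def by blast
  ultimately show ?thesis using zero_in_inv_B that by blast
qed

text \<open>If A^B is a large domain, nonzero invariants are right non-zero divisors of A:
  the annihilator of s is a submodule meeting A^B only in 0.\<close>
lemma invariant_right_cancel:
  assumes domain: "is_domain_sub (inv_B B)" and large: "large_in B"
    and s: "s \<in> inv_B B" "s \<noteq> 0" and xs: "x * s = 0"
  shows "x = 0"
proof (rule ccontr)
  assume "x \<noteq> 0"
  with xs have "{x. x * s = 0} \<noteq> {0}" by blast
  then obtain t where "t \<in> inv_B B" "t * s = 0" "t \<noteq> 0"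
    using large_nonzero_invariant[OF large annihilator_B_submodule[OF s(1)]] by blast
  then show False using domain s unfolding is_domain_sub_def by blast
qed

text \<open>First half of critical compressibility: A embeds into every nonzero submodule,
  namely via right multiplication by a nonzero invariant element of it.\<close>
lemma embeds_into_nonzero_submodule:
  assumes domain: "is_domain_sub (inv_B B)" and large: "large_in B"
    and N: "B_submodule B N" "N \<noteq> {0}"
  shows "embeds_into_sub B N"
proof -
  obtain s where s: "s \<in> inv_B B" "s \<in> N" "s \<noteq> 0"
    using large_nonzero_invariant[OF large N] .
  have "inj (\<lambda>x. x * s)"
  proof (rule injI)
    fix x y assume "x * s = y * s"
    then have "(x - y) * s = 0" by (simp add: left_diff_distrib)
    then have "x - y = 0" using invariant_right_cancel[OF domain large s(1,3)] by blast
    then show "x = y" by simp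
  qed
  moreover have "range (\<lambda>x. x * s) \<subseteq> N"
    using B_submodule_left_ideal[OF N(1)] s(2) unfolding left_ideal_def by blast
  ultimately show ?thesis
    using right_mult_B_hom[OF s(1)] unfolding embeds_into_sub_def by blast
qed

text \<open>An embedding A \<rightarrow> A/N produces an element u (the image of 1) with Au \<inter> N = 0:
  x u \<equiv> f(x) modulo N, and f(x) \<in> N forces x = 0.\<close>
lemma quotient_embedding_free_element:
  assumes "embeds_into_quot B N" and N: "B_submodule B N"
  obtains u where "\<And>x. x * u \<in> N \<Longrightarrow> x = 0"
proof -
  obtain f where f_lin: "\<forall>\<phi>\<in>B. \<forall>x. f (\<phi> x) - \<phi> (f x) \<in> N"
    and f_inj: "\<forall>x. f x \<in> N \<longrightarrow> x = 0"
    using assms(1) unfolding embeds_into_quot_def by blast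
  have "x = 0" if xu: "x * f 1 \<in> N" for x
  proof -
    have "f ((\<lambda>y. x * y) 1) - (\<lambda>y. x * y) (f 1) \<in> N"
      using f_lin left_mult_in_B by blast
    then have "f x - x * f 1 \<in> N" by simp
    with xu have "(f x - x * f 1) + x * f 1 \<in> N"
      using N unfolding B_submodule_def add_subgroup_def by blast
    then show "x = 0" using f_inj by simp
  qed
  then show ?thesis using that by blast
qed

lemma no_embedding_into_factor:
  assumes domain: "is_domain_sub (inv_B B)" and large: "large_in B"
    and cases: "uniform_ring TYPE('a) \<or>
         (left_permutable (inv_B B - {0}) \<and> (\<forall>s\<in>inv_B B - {0}. left_nonzero_divisor s))"
    and N: "B_submodule B N" "N \<noteq> {0}"
  shows "\<not> embeds_into_quot B N"
proof
  assume "embeds_into_quot B N"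
  then obtain u where free: "\<And>x. x * u \<in> N \<Longrightarrow> x = 0"
    using quotient_embedding_free_element N(1) by blast
  have ideal: "left_ideal N" using B_submodule_left_ideal[OF N(1)] .
  from cases show False
  proof
    assume uniform: "uniform_ring TYPE('a)"
    have "(1::'a) \<noteq> 0" using domain unfolding is_domain_sub_def by blast
    moreover have "0 \<in> N" using ideal unfolding left_ideal_def add_subgroup_def by blast
    ultimately have "u \<noteq> 0" using free[of 1] by auto
    then obtain x where "x * u \<in> N" "x * u \<noteq> 0"
      using uniform_meets_cyclic[OF uniform ideal N(2)] by blast
    then show False using free[of x] by simp
  next
    assume "left_permutable (inv_B B - {0}) \<and> (\<forall>s\<in>inv_B B - {0}. left_nonzero_divisor s)"
    then have permutable: "left_permutable (inv_B B - {0})" by blast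
    obtain s where s: "s \<in> inv_B B" "s \<in> N" "s \<noteq> 0"
      using large_nonzero_invariant[OF large N] .
    then obtain y b where y: "y \<in> inv_B B - {0}" "b * s = y * u"
      using permutable unfolding left_permutable_def by blast
    have "y * u \<in> N" using y(2) s(2) ideal unfolding left_ideal_def by metis
    then show False using free y(1) by blast
  qed
qed

end

theorem lemma3p4:
  fixes scale :: "'k::comm_ring_1 \<Rightarrow> 'a::ring_1 \<Rightarrow> 'a"
    and B :: "('a \<Rightarrow> 'a) set"
  assumes "algebra_over scale"
    and "subalgebra_End scale B"
    and "Lmult \<subseteq> B"
    and "is_domain_sub (inv_B B)"
    and "large_in B"
    and "uniform_ring TYPE('a) \<or>
         (left_permutable (inv_B B - {0}) \<and> (\<forall>s\<in>inv_B B - {0}. left_nonzero_divisor s))"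
  shows "critically_compressible B"
proof -
  interpret operator_algebra scale B using assms(2,3) by unfold_locales
  have "(UNIV::'a set) \<noteq> {0}"
    using assms(4) unfolding is_domain_sub_def by (metis UNIV_I singletonD)
  then show ?thesis
    unfolding critically_compressible_def
    using embeds_into_nonzero_submodule[OF assms(4,5)]
      no_embedding_into_factor[OF assms(4,5,6)] by blast
qed

end
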